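(* Let $i\in\{1,2\}$ and consider $\mathrm{SU}(2)\times\mathbb{R}$ with the sub-Riemannian metric $d_i$ and its geodesics $\tilde\gamma_i(\alpha_1,\alpha_2,\alpha_3,\beta;t)$, $t\in\mathbb{R}$, as described in the context, with $\alpha_2\neq\pm1$. Then $\hat t>0$ is a conjugate time along $\tilde\gamma_i$ if and only if $$\sin\frac{w_i\hat t}{2}\Bigl(\sin\frac{w_i\hat t}{2}-\frac{w_i\hat t}{2}\cos\frac{w_i\hat t}{2}\Bigr)=0,$$ where $w_2=\sqrt{1-\alpha_2^2+\beta^2}$ and $w_1=\sqrt{1-\alpha_2^2+(\beta-\alpha_2)^2}$.
   Context: $\mathrm{SU}(2)\times\mathbb{R}$ is the group of matrices $(A,B,v)=\begin{pmatrix}A&B&0\\-\overline{B}&\overline{A}&0\\0&0&e^v\end{pmatrix}$, $A,B\in\mathbb{C}$, $|A|^2+|B|^2=1$, $v\in\mathbb{R}$, with identity $\mathrm{Id}$. Let $E_1=\tfrac12(e_{12}-e_{21})$, $E_2=\tfrac{i}{2}(e_{12}+e_{21})$, $E_3=\tfrac{i}{2}(e_{11}-e_{22})$, $E_4=e_{33}$ ($e_{jk}$ the $3\times3$ matrix units). Put $e_1=E_1$, $e_3=E_2$, $e_4=E_3$, and $e_2=E_4-E_3$ for $i=1$, $e_2=E_4$ for $i=2$. The metric $d_i$ is the left-invariant sub-Riemannian metric defined by the left-invariant distribution with value $\mathrm{span}(e_1,e_2,e_3)$ at $\mathrm{Id}$ and inner product making $e_1,e_2,e_3$ orthonormal. Its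 arclength-parametrized geodesics from $\mathrm{Id}$ are $\tilde\gamma_i(\alpha_1,\alpha_2,\alpha_3,\beta;t)=\exp(t(\alpha_1e_1+\alpha_2e_2+\alpha_3e_3+\beta e_4))\exp(-t\beta e_4)$ with $(\alpha_1,\alpha_2,\alpha_3)\in\mathbb{S}^2$, $\beta\in\mathbb{R}$; this defines the exponential map $\mathrm{Exp}_i:C\times\mathbb{R}_+\to\mathrm{SU}(2)\times\mathbb{R}$, $(\lambda,t)\mapsto\tilde\gamma_i(\lambda;t)$, where $C=\mathbb{S}^2\times\mathbb{R}\ni\lambda=(\alpha_1,\alpha_2,\alpha_3,\beta)$. A time $\hat t>0$ is a conjugate time along $\tilde\gamma_i(\lambda;\cdot)$ if the differential of $\mathrm{Exp}_i$ at $(\lambda,\hat t)$ is degenerate. *)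

theory Defs
  imports "HOL-Analysis.Analysis"
begin

text \<open>3x3 complex matrices; indices of type 3 are 1, 2, 3 (= 0 mod 3, distinct).\<close>

definition munit :: "3 \<Rightarrow> 3 \<Rightarrow> complex^3^3" where
  "munit j k = (\<chi> a b. if a = j \<and> b = k then 1 else 0)"

primrec matpow :: "complex^3^3 \<Rightarrow> nat \<Rightarrow> complex^3^3" where
  "matpow M 0 = mat 1"
| "matpow M (Suc n) = M ** matpow M n"

definition mexp :: "complex^3^3 \<Rightarrow> complex^3^3" where
  "mexp M = (\<Sum>n. (1 / fact n :: real) *\<^sub>R matpow M n)"

definition E1 :: "complex^3^3" where "E1 = mat (1/2 :: complex) ** (munit 1 2 - munit 2 1)"
definition E2 :: "complex^3^3" where "E2 = mat (\<i>/2) ** (munit 1 2 + munit 2 1)"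
definition E3 :: "complex^3^3" where "E3 = mat (\<i>/2) ** (munit 1 1 - munit 2 2)"
definition E4 :: "complex^3^3" where "E4 = munit 3 3"

definition ebasis :: "nat \<Rightarrow> nat \<Rightarrow> complex^3^3" where
  "ebasis i k = (if k = 1 then E1 else if k = 3 then E2 else if k = 4 then E3
                 else (if i = 1 then E4 - E3 else E4))"

text \<open>Geodesic gamma_i(alpha_1,alpha_2,alpha_3,beta; t), extended to all alpha in R^3
  (the exponential map Exp_i is its restriction to alpha in S^2).\<close>
definition geod :: "nat \<Rightarrow> real^3 \<Rightarrow> real \<Rightarrow> real \<Rightarrow> complex^3^3" where
  "geod i \<alpha> \<beta> t =
     mexp (t *\<^sub>R (\<alpha>$1 *\<^sub>R ebasis i 1 + \<alpha>$2 *\<^sub>R ebasis i 2 + \<alpha>$3 *\<^sub>R ebasis i 3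
                  + \<beta> *\<^sub>R ebasis i 4))
     ** mexp ((- t * \<beta>) *\<^sub>R ebasis i 4)"

text \<open>t is a conjugate time along gamma_i(lambda; .) iff the differential of
  Exp_i : S^2 x R x R_+ -> SU(2) x R at (lambda, t) is degenerate, i.e. it kills a
  nonzero tangent vector (xi, b, s) with xi orthogonal to alpha (tangent to S^2).
  The differential is computed in the ambient matrix space (SU(2)xR is an embedded
  submanifold).\<close>
definition conjugate_time :: "nat \<Rightarrow> real^3 \<Rightarrow> real \<Rightarrow> real \<Rightarrow> bool" where
  "conjugate_time i \<alpha> \<beta> t \<longleftrightarrow>
     (\<exists>D. ((\<lambda>(a, b, s). geod i a b s) has_derivative D) (at (\<alpha>, \<beta>, t)) \<and>
          (\<exists>\<xi> b s. \<xi> \<bullet> \<alpha> = 0 \<and> (\<xi>, b, s) \<noteq> 0 \<and> D (\<xi>, b, s) = 0))"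

definition wfreq :: "nat \<Rightarrow> real^3 \<Rightarrow> real \<Rightarrow> real" where
  "wfreq i \<alpha> \<beta> = (if i = 2 then sqrt (1 - (\<alpha>$2)^2 + \<beta>^2)
                    else sqrt (1 - (\<alpha>$2)^2 + (\<beta> - \<alpha>$2)^2))"

end

(* The su(2)-part X of the generator alpha_1 e_1 + alpha_2 e_2 + alpha_3 e_3 + beta e_4 is a
   traceless 2x2 block with X^2 = -(w/2)^2, where w^2 = alpha_1^2 + alpha_3^2 + c^2 and c is the
   E_3-coefficient of the generator (for |alpha| = 1 this w is w_i).  Hence
   exp(tX) = cos(wt/2) + (2/w) sin(wt/2) X, and the correction exp(-t beta e_4) is a diagonal phase.
   In this closed form the differential of Exp_i in a direction (xi, b', s'), xi orthogonal to
   alpha, vanishes iff five real linear equations hold.  Put theta = wt/2.  If sin theta and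
   sin theta - theta cos theta are both nonzero, the equations force (xi, b', s') = 0; if
   sin theta = 0, the direction (-alpha_3, 0, alpha_1; 0, 0) solves them, and if
   tan theta = theta, so does (t alpha_3/2, 0, -t alpha_1/2; 1, 0). *)

theory Submission
  imports Defs
begin

definition bmat :: "complex \<Rightarrow> complex \<Rightarrow> complex \<Rightarrow> complex \<Rightarrow> complex \<Rightarrow> complex^3^3" where
  "bmat p q r u e = (\<chi> a b. if a = 1 \<and> b = 1 then p else if a = 1 \<and> b = 2 then q
      else if a = 2 \<and> b = 1 then r else if a = 2 \<and> b = 2 then u else if a = 3 \<and> b = 3 then e else 0)"

lemma bmat_nth [simp]:
  "bmat p q r u e $ 1 $ 1 = p" "bmat p q r u e $ 1 $ 2 = q" "bmat p q r u e $ 1 $ 3 = 0"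
  "bmat p q r u e $ 2 $ 1 = r" "bmat p q r u e $ 2 $ 2 = u" "bmat p q r u e $ 2 $ 3 = 0"
  "bmat p q r u e $ 3 $ 1 = 0" "bmat p q r u e $ 3 $ 2 = 0" "bmat p q r u e $ 3 $ 3 = e"
  by (simp_all add: bmat_def)

lemma bmat_eq_iff:
  "bmat p q r u e = bmat p' q' r' u' e' \<longleftrightarrow> p = p' \<and> q = q' \<and> r = r' \<and> u = u' \<and> e = e'"
  by (metis bmat_nth(1,2,4,5,9))

lemma bmat_eq_0_iff: "bmat p q r u e = 0 \<longleftrightarrow> p = 0 \<and> q = 0 \<and> r = 0 \<and> u = 0 \<and> e = 0"
  by (auto simp: vec_eq_iff forall_3)

lemma bmat_mult: "bmat p q r u e ** bmat p' q' r' u' e' =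
    bmat (p * p' + q * r') (p * q' + q * u') (r * p' + u * r') (r * q' + u * u') (e * e')"
  by (simp add: vec_eq_iff forall_3 matrix_matrix_mult_def sum_3)

lemma bmat_add: "bmat p q r u e + bmat p' q' r' u' e' = bmat (p + p') (q + q') (r + r') (u + u') (e + e')"
  by (simp add: vec_eq_iff forall_3)

lemma bmat_diff: "bmat p q r u e - bmat p' q' r' u' e' = bmat (p - p') (q - q') (r - r') (u - u') (e - e')"
  by (simp add: vec_eq_iff forall_3)

lemma scaleR_bmat: "x *\<^sub>R bmat p q r u e = bmat (x *\<^sub>R p) (x *\<^sub>R q) (x *\<^sub>R r) (x *\<^sub>R u) (x *\<^sub>R e)"
  by (simp add: vec_eq_iff forall_3)

lemma mat_1_eq_bmat: "mat 1 = bmat 1 0 0 1 1"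
  by (simp add: vec_eq_iff forall_3 mat_def)

lemma E1_eq_bmat: "E1 = bmat 0 (1/2) (-1/2) 0 0"
  and E2_eq_bmat: "E2 = bmat 0 (\<i>/2) (\<i>/2) 0 0"
  and E3_eq_bmat: "E3 = bmat (\<i>/2) 0 0 (-\<i>/2) 0"
  and E4_eq_bmat: "E4 = bmat 0 0 0 0 1"
  by (simp_all add: E1_def E2_def E3_def E4_def munit_def vec_eq_iff forall_3
      matrix_matrix_mult_def sum_3 mat_def)

definition pow_coeff_id :: "real \<Rightarrow> nat \<Rightarrow> real" where
  "pow_coeff_id K n = (if even n then K ^ (n div 2) else 0)"

definition pow_coeff_lin :: "real \<Rightarrow> nat \<Rightarrow> real" where
  "pow_coeff_lin K n = (if even n then 0 else K ^ (n div 2))"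

lemma pow_coeff_id_Suc: "pow_coeff_id K (Suc n) = K * pow_coeff_lin K n"
  by (auto simp: pow_coeff_id_def pow_coeff_lin_def elim!: oddE)

lemma pow_coeff_lin_Suc: "pow_coeff_lin K (Suc n) = pow_coeff_id K n"
  by (auto simp: pow_coeff_id_def pow_coeff_lin_def elim!: evenE)

lemma matpow_bmat_traceless:
  assumes "p * p + q * r = of_real K"
  shows "matpow (bmat p q r (-p) e) n =
    bmat (of_real (pow_coeff_id K n) + of_real (pow_coeff_lin K n) * p)
      (of_real (pow_coeff_lin K n) * q) (of_real (pow_coeff_lin K n) * r)
      (of_real (pow_coeff_id K n) - of_real (pow_coeff_lin K n) * p) (e ^ n)"
proof (induction n)
  case 0
  show ?case by (simp add: mat_1_eq_bmat pow_coeff_id_def pow_coeff_lin_def)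
next
  case (Suc n)
  show ?case
    unfolding matpow.simps Suc bmat_mult pow_coeff_id_Suc pow_coeff_lin_Suc of_real_mult
      assms[symmetric] bmat_eq_iff
    by (simp add: algebra_simps)
qed

definition sinc :: "real \<Rightarrow> real" where
  "sinc w = (if w = 0 then 1 else sin w / w)"

lemma sums_pow_coeff_id: "(\<lambda>n. pow_coeff_id (- (w\<^sup>2)) n / fact n) sums cos w"
proof -
  have "pow_coeff_id (- (w\<^sup>2)) n / fact n = cos_coeff n * w ^ n" for n
  proof (cases "even n")
    case True
    then obtain k where "n = 2 * k" by blast
    then show ?thesis
      by (simp add: pow_coeff_id_def cos_coeff_def power_mult power_minus[of "w\<^sup>2"])
  qed (simp add: pow_coeff_id_def cos_coeff_def)
  then show ?thesis
    using cos_converges[of w] by simp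
qed

lemma sums_pow_coeff_lin: "(\<lambda>n. pow_coeff_lin (- (w\<^sup>2)) n / fact n) sums sinc w"
proof (cases "w = 0")
  case True
  have "pow_coeff_lin 0 n / fact n = (if n = 1 then 1 else 0)" for n
    by (auto simp: pow_coeff_lin_def elim!: oddE)
  then show ?thesis
    using True sums_single[of 1 "\<lambda>_. 1 :: real"] by (simp add: sinc_def)
next
  case False
  have "pow_coeff_lin (- (w\<^sup>2)) n / fact n = sin_coeff n * w ^ n / w" for n
  proof (cases "even n")
    case False
    then obtain k where "n = 2 * k + 1" by (rule oddE)
    then show ?thesis
      using \<open>w \<noteq> 0\<close> by (simp add: pow_coeff_lin_def sin_coeff_def power_mult power_minus[of "w\<^sup>2"])
  qed (simp add: pow_coeff_lin_def sin_coeff_def)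
  then show ?thesis
    using sums_divide[OF sin_converges[of w], of w] False by (simp add: sinc_def)
qed

lemma sums_vec:
  fixes f :: "nat \<Rightarrow> 'a::real_normed_vector^'n"
  assumes "\<And>j. (\<lambda>n. f n $ j) sums L $ j"
  shows "f sums L"
proof -
  have "(\<lambda>N. \<chi> j. \<Sum>n<N. f n $ j) \<longlonglongrightarrow> (\<chi> j. L $ j)"
    using assms unfolding sums_def by (intro tendsto_vec_lambda)
  moreover have "(\<lambda>N. \<chi> j. \<Sum>n<N. f n $ j) = (\<lambda>N. \<Sum>n<N. f n)"
    by (simp add: fun_eq_iff vec_eq_iff)
  ultimately show ?thesis
    by (simp add: sums_def vec_nth_inverse)
qed

lemma mexp_bmat_traceless:
  assumes "p * p + q * r = - of_real (w\<^sup>2)"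
  shows "mexp (bmat p q r (-p) e) =
    bmat (of_real (cos w) + of_real (sinc w) * p) (of_real (sinc w) * q)
      (of_real (sinc w) * r) (of_real (cos w) - of_real (sinc w) * p) (exp e)"
    (is "_ = ?L")
proof -
  let ?A = "\<lambda>n. complex_of_real (pow_coeff_id (- (w\<^sup>2)) n / fact n)"
  let ?B = "\<lambda>n. complex_of_real (pow_coeff_lin (- (w\<^sup>2)) n / fact n)"
  have K: "p * p + q * r = of_real (- (w\<^sup>2))"
    using assms by simp
  have A: "?A sums of_real (cos w)" and B: "?B sums of_real (sinc w)"
    by (intro sums_of_real sums_pow_coeff_id sums_pow_coeff_lin)+
  have terms: "(1 / fact n :: real) *\<^sub>R matpow (bmat p q r (-p) e) n =
      bmat (?A n + ?B n * p) (?B n * q) (?B n * r) (?A n - ?B n * p) (e ^ n /\<^sub>R fact n)" for n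
    unfolding matpow_bmat_traceless[OF K] scaleR_bmat bmat_eq_iff
    by (simp add: scaleR_conv_of_real algebra_simps divide_inverse)
  have "(\<lambda>n. (1 / fact n :: real) *\<^sub>R matpow (bmat p q r (-p) e) n) sums ?L"
  proof (intro sums_vec)
    fix j k :: 3
    show "(\<lambda>n. ((1 / fact n :: real) *\<^sub>R matpow (bmat p q r (-p) e) n) $ j $ k) sums ?L $ j $ k"
      using exhaust_3[of j] exhaust_3[of k]
      by (auto simp only: terms bmat_nth intro!: sums_add sums_diff sums_mult2 A B exp_converges)
  qed
  then show ?thesis
    unfolding mexp_def by (rule sums_unique[symmetric])
qed

definition E3_coeff :: "nat \<Rightarrow> real^3 \<Rightarrow> real \<Rightarrow> real" where
  "E3_coeff i a b = (if i = 1 then b - a$2 else b)"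

definition geo_mat :: "real \<Rightarrow> real \<Rightarrow> real \<Rightarrow> real \<Rightarrow> real \<Rightarrow> real \<Rightarrow> real \<Rightarrow> complex^3^3" where
  "geo_mat y1 y2 c \<theta> \<sigma> \<phi> e = bmat
     ((of_real (cos \<theta>) + \<i> * of_real (c * \<sigma>)) * cis (- \<phi>))
     ((of_real y1 + \<i> * of_real y2) * of_real \<sigma> * cis \<phi>)
     ((- of_real y1 + \<i> * of_real y2) * of_real \<sigma> * cis (- \<phi>))
     ((of_real (cos \<theta>) - \<i> * of_real (c * \<sigma>)) * cis \<phi>)
     (of_real (exp e))"

definition geod_closed :: "nat \<Rightarrow> (real^3) \<times> real \<times> real \<Rightarrow> complex^3^3" where
  "geod_closed i = (\<lambda>(a, b, s).
     let c = E3_coeff i a b; w = sqrt ((a$1)\<^sup>2 + (a$3)\<^sup>2 + c\<^sup>2)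
     in geo_mat (a$1) (a$3) c (w * s / 2) (sin (w * s / 2) / w) (s * b / 2) (s * a$2))"

lemma generator_eq_bmat:
  "s *\<^sub>R (a$1 *\<^sub>R ebasis i 1 + a$2 *\<^sub>R ebasis i 2 + a$3 *\<^sub>R ebasis i 3 + b *\<^sub>R ebasis i 4) =
   bmat (\<i> * of_real (s * E3_coeff i a b / 2)) (of_real (s / 2) * (of_real (a$1) + \<i> * of_real (a$3)))
     (of_real (s / 2) * (- of_real (a$1) + \<i> * of_real (a$3))) (- (\<i> * of_real (s * E3_coeff i a b / 2)))
     (of_real (s * a$2))"
  by (cases "i = 1"; simp add: ebasis_def E1_eq_bmat E2_eq_bmat E3_eq_bmat E4_eq_bmat bmat_add
      bmat_diff scaleR_bmat; simp add: bmat_eq_iff E3_coeff_def scaleR_conv_of_real complex_eq_iff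
      field_simps)

lemma mexp_scaleR_ebasis_4: "mexp (x *\<^sub>R ebasis i 4) = bmat (cis (x / 2)) 0 0 (cis (- (x / 2))) 1"
proof -
  have "x *\<^sub>R ebasis i 4 = bmat (\<i> * of_real (x / 2)) 0 0 (- (\<i> * of_real (x / 2))) 0"
    by (simp add: ebasis_def E3_eq_bmat scaleR_bmat; simp add: bmat_eq_iff scaleR_conv_of_real)
  moreover have "\<i> * of_real (x / 2) * (\<i> * of_real (x / 2)) + 0 * 0 = - of_real ((x / 2)\<^sup>2)"
    by (simp add: power2_eq_square complex_eq_iff)
  moreover have "sinc (x / 2) * (x / 2) = sin (x / 2)"
    by (simp add: sinc_def)
  ultimately show ?thesis
    by (simp add: mexp_bmat_traceless bmat_eq_iff complex_eq_iff)
qed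

lemma geod_eq_geod_closed:
  assumes "0 < (a$1)\<^sup>2 + (a$3)\<^sup>2 + (E3_coeff i a b)\<^sup>2"
  shows "geod i a b s = geod_closed i (a, b, s)"
proof -
  define c where "c = E3_coeff i a b"
  define w where "w = sqrt ((a$1)\<^sup>2 + (a$3)\<^sup>2 + c\<^sup>2)"
  define \<theta> where "\<theta> = w * s / 2"
  define \<sigma> where "\<sigma> = sin \<theta> / w"
  have "w > 0" and w2: "w\<^sup>2 = (a$1)\<^sup>2 + (a$3)\<^sup>2 + c\<^sup>2"
    using assms by (simp_all add: w_def c_def)
  have sq: "\<i> * of_real (s * c / 2) * (\<i> * of_real (s * c / 2)) +
      of_real (s / 2) * (of_real (a$1) + \<i> * of_real (a$3)) *
      (of_real (s / 2) * (- of_real (a$1) + \<i> * of_real (a$3))) = - of_real (\<theta>\<^sup>2)"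
    by (simp add: \<theta>_def complex_eq_iff power2_eq_square w2[unfolded power2_eq_square] algebra_simps)
  have \<sigma>_eq: "\<sigma> = sinc \<theta> * (s / 2)"
    using \<open>w > 0\<close> by (simp add: sinc_def \<theta>_def \<sigma>_def field_simps)
  have sinc_\<sigma>: "of_real (sinc \<theta>) * (of_real (s / 2) * z) = of_real \<sigma> * z"
    "of_real (sinc \<theta>) * (\<i> * of_real (s * c / 2)) = \<i> * of_real (c * \<sigma>)" for z :: complex
    unfolding \<sigma>_eq by (simp_all add: complex_eq_iff)
  have "geod_closed i (a, b, s) = geo_mat (a$1) (a$3) c \<theta> \<sigma> (s * b / 2) (s * a$2)"
    by (simp add: geod_closed_def c_def w_def \<theta>_def \<sigma>_def Let_def)
  then show ?thesis
    unfolding geod_def generator_eq_bmat c_def[symmetric] mexp_bmat_traceless[OF sq] sinc_\<sigma>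
      mexp_scaleR_ebasis_4 bmat_mult
    by (simp add: geo_mat_def bmat_eq_iff flip: of_real_mult exp_of_real)
qed

lemma has_derivative_vec_lambda:
  fixes f :: "'n::finite \<Rightarrow> 'a::real_normed_vector \<Rightarrow> 'b::euclidean_space"
  assumes "\<And>j. (f j has_derivative f' j) (at x within S)"
  shows "((\<lambda>y. \<chi> j. f j y) has_derivative (\<lambda>h. \<chi> j. f' j h)) (at x within S)"
  unfolding has_derivative_componentwise_within[where f = "\<lambda>y. \<chi> j. f j y"] Basis_vec_def
  using assms by (auto simp: inner_axis intro: has_derivative_inner_left)

lemma bmat_has_derivative:
  assumes "(P has_derivative P') (at x)" "(Q has_derivative Q') (at x)" "(R has_derivative R') (at x)"
    "(U has_derivative U') (at x)" "(E has_derivative E') (at x)"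
  shows "((\<lambda>z. bmat (P z) (Q z) (R z) (U z) (E z)) has_derivative
    (\<lambda>h. bmat (P' h) (Q' h) (R' h) (U' h) (E' h))) (at x)"
  unfolding bmat_def
proof (intro has_derivative_vec_lambda)
  fix j k :: 3
  show "((\<lambda>z. if j = 1 \<and> k = 1 then P z else if j = 1 \<and> k = 2 then Q z
      else if j = 2 \<and> k = 1 then R z else if j = 2 \<and> k = 2 then U z else if j = 3 \<and> k = 3 then E z else 0)
    has_derivative (\<lambda>h. if j = 1 \<and> k = 1 then P' h else if j = 1 \<and> k = 2 then Q' h
      else if j = 2 \<and> k = 1 then R' h else if j = 2 \<and> k = 2 then U' h else if j = 3 \<and> k = 3 then E' h else 0))
    (at x)"
    using exhaust_3[of j] exhaust_3[of k] by (auto simp: assms)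
qed

lemma geo_mat_has_derivative:
  fixes Y1 Y2 C \<Theta> \<Sigma> \<Phi> E :: "'a::real_normed_vector \<Rightarrow> real"
  assumes "(Y1 has_derivative y1') (at x)" "(Y2 has_derivative y2') (at x)"
    "(C has_derivative c') (at x)" "(\<Theta> has_derivative \<theta>') (at x)"
    "(\<Sigma> has_derivative \<sigma>') (at x)" "(\<Phi> has_derivative \<phi>') (at x)" "(E has_derivative e') (at x)"
  obtains G' where
    "((\<lambda>z. geo_mat (Y1 z) (Y2 z) (C z) (\<Theta> z) (\<Sigma> z) (\<Phi> z) (E z)) has_derivative G') (at x)"
    "\<And>h. G' h = 0 \<longleftrightarrow>
       - sin (\<Theta> x) * \<theta>' h + C x * \<Sigma> x * \<phi>' h = 0 \<and>
       c' h * \<Sigma> x + C x * \<sigma>' h - cos (\<Theta> x) * \<phi>' h = 0 \<and>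
       y1' h * \<Sigma> x + Y1 x * \<sigma>' h - Y2 x * \<Sigma> x * \<phi>' h = 0 \<and>
       y2' h * \<Sigma> x + Y2 x * \<sigma>' h + Y1 x * \<Sigma> x * \<phi>' h = 0 \<and>
       e' h = 0"
proof -
  define p1 where "p1 h = - sin (\<Theta> x) * \<theta>' h + C x * \<Sigma> x * \<phi>' h" for h
  define p2 where "p2 h = c' h * \<Sigma> x + C x * \<sigma>' h - cos (\<Theta> x) * \<phi>' h" for h
  define q1 where "q1 h = y1' h * \<Sigma> x + Y1 x * \<sigma>' h - Y2 x * \<Sigma> x * \<phi>' h" for h
  define q2 where "q2 h = y2' h * \<Sigma> x + Y2 x * \<sigma>' h + Y1 x * \<Sigma> x * \<phi>' h" for h
  define G' where "G' h = bmat
     ((of_real (p1 h) + \<i> * of_real (p2 h)) * cis (- \<Phi> x))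
     ((of_real (q1 h) + \<i> * of_real (q2 h)) * cis (\<Phi> x))
     ((- of_real (q1 h) + \<i> * of_real (q2 h)) * cis (- \<Phi> x))
     ((of_real (p1 h) - \<i> * of_real (p2 h)) * cis (\<Phi> x))
     (of_real (exp (E x) * e' h))" for h
  have "((\<lambda>z. geo_mat (Y1 z) (Y2 z) (C z) (\<Theta> z) (\<Sigma> z) (\<Phi> z) (E z)) has_derivative G') (at x)"
    unfolding geo_mat_def G'_def
    by (rule bmat_has_derivative; rule has_derivative_eq_rhs, (rule derivative_intros assms)+,
        simp add: fun_eq_iff p1_def p2_def q1_def q2_def complex_eq_iff algebra_simps)
  then show ?thesis
    by (rule that) (simp add: G'_def bmat_eq_0_iff; simp add: complex_eq_iff p1_def p2_def q1_def q2_def;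
        blast)
qed

(* Where the su(2)-part of the generator is nonzero, so that sin (w s / 2) / w is smooth. *)
definition geod_closed_domain :: "nat \<Rightarrow> ((real^3) \<times> real \<times> real) set" where
  "geod_closed_domain i = {(a, b, s). 0 < (a$1)\<^sup>2 + (a$3)\<^sup>2 + (E3_coeff i a b)\<^sup>2}"

lemma open_geod_closed_domain: "open (geod_closed_domain i)"
  unfolding geod_closed_domain_def E3_coeff_def case_prod_unfold
  by (cases "i = 1") (auto intro!: open_Collect_less continuous_intros)

locale geodesic_data =
  fixes i :: nat and a :: "real^3" and \<beta> t :: real
  assumes norm_a: "norm a = 1" and a2_neq: "a$2 \<noteq> 1" "a$2 \<noteq> -1" and t_pos: "0 < t"
begin

definition "c = E3_coeff i a \<beta>"
definition "w = sqrt ((a$1)\<^sup>2 + (a$3)\<^sup>2 + c\<^sup>2)"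
definition "\<theta> = w * t / 2"
definition "\<sigma> = sin \<theta> / w"

definition "dw \<xi> bd = (a$1 * \<xi>$1 + a$3 * \<xi>$3 + c * E3_coeff i \<xi> bd) / w"
definition "d\<theta> \<xi> bd sd = (dw \<xi> bd * t + w * sd) / 2"
definition "d\<sigma> \<xi> bd sd = (cos \<theta> * d\<theta> \<xi> bd sd - \<sigma> * dw \<xi> bd) / w"
definition "d\<phi> bd sd = (sd * \<beta> + t * bd) / 2"

(* Real and imaginary parts of the (1,1) and (1,2) entries of the differential of geod at
   (a, \<beta>, t), applied to (\<xi>, bd, sd) and stripped of their unit phase factors, and its
   (3,3) entry. *)
definition in_kernel :: "real^3 \<Rightarrow> real \<Rightarrow> real \<Rightarrow> bool" where
  "in_kernel \<xi> bd sd \<longleftrightarrow>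
     - sin \<theta> * d\<theta> \<xi> bd sd + c * \<sigma> * d\<phi> bd sd = 0 \<and>
     E3_coeff i \<xi> bd * \<sigma> + c * d\<sigma> \<xi> bd sd - cos \<theta> * d\<phi> bd sd = 0 \<and>
     \<xi>$1 * \<sigma> + a$1 * d\<sigma> \<xi> bd sd - a$3 * \<sigma> * d\<phi> bd sd = 0 \<and>
     \<xi>$3 * \<sigma> + a$3 * d\<sigma> \<xi> bd sd + a$1 * \<sigma> * d\<phi> bd sd = 0 \<and>
     sd * a$2 + t * \<xi>$2 = 0"

lemma sum_squares_a: "(a$1)\<^sup>2 + (a$2)\<^sup>2 + (a$3)\<^sup>2 = 1"
proof -
  have "a \<bullet> a = 1"
    using norm_a by (simp add: power2_norm_eq_inner[symmetric])
  then show ?thesis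
    by (simp add: inner_vec_def sum_3 power2_eq_square)
qed

lemma a13_pos: "0 < (a$1)\<^sup>2 + (a$3)\<^sup>2"
proof -
  have "(a$2)\<^sup>2 \<noteq> 1"
    using a2_neq by (simp add: power2_eq_1_iff)
  then show ?thesis
    using sum_squares_a by (smt (verit) zero_le_power2)
qed

lemma w_squared_pos: "0 < (a$1)\<^sup>2 + (a$3)\<^sup>2 + c\<^sup>2"
  using a13_pos by (simp add: add_pos_nonneg)

lemma w_pos: "0 < w"
  using w_squared_pos by (simp add: w_def)

lemma w_squared: "w\<^sup>2 = (a$1)\<^sup>2 + (a$3)\<^sup>2 + c\<^sup>2"
  using w_squared_pos by (simp add: w_def)

lemma geod_closed_has_derivative:
  obtains D where "(geod_closed i has_derivative D) (at (a, \<beta>, t))"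
    and "\<And>\<xi> bd sd. D (\<xi>, bd, sd) = 0 \<longleftrightarrow> in_kernel \<xi> bd sd"
proof -
  let ?x = "(a, \<beta>, t)"
  define C where "C z = E3_coeff i (fst z) (fst (snd z))" for z :: "(real^3) \<times> real \<times> real"
  define W where "W z = sqrt ((fst z $ 1)\<^sup>2 + (fst z $ 3)\<^sup>2 + (C z)\<^sup>2)" for z
  define \<Theta> where "\<Theta> z = W z * snd (snd z) / 2" for z
  have closed: "geod_closed i = (\<lambda>z. geo_mat (fst z $ 1) (fst z $ 3) (C z) (\<Theta> z) (sin (\<Theta> z) / W z)
      (snd (snd z) * fst (snd z) / 2) (snd (snd z) * fst z $ 2))"
    by (simp add: fun_eq_iff geod_closed_def C_def W_def \<Theta>_def Let_def)
  have x: "C ?x = c" "W ?x = w" "\<Theta> ?x = \<theta>"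
    by (simp_all add: C_def W_def \<Theta>_def c_def w_def \<theta>_def)
  note d_nth = bounded_linear.has_derivative[OF bounded_linear_vec_nth]
  have dY: "((\<lambda>z. fst z $ k) has_derivative (\<lambda>h. fst h $ k)) (at ?x)" for k
    by (intro derivative_intros d_nth)
  have dC: "(C has_derivative (\<lambda>h. E3_coeff i (fst h) (fst (snd h)))) (at ?x)"
    unfolding C_def[abs_def] E3_coeff_def
    by (cases "i = 1") (auto intro!: derivative_eq_intros d_nth)
  have dW: "(W has_derivative (\<lambda>h. dw (fst h) (fst (snd h)))) (at ?x)"
    unfolding W_def[abs_def]
    by (rule has_derivative_eq_rhs, rule derivative_intros, simp add: x w_squared_pos,
        (rule derivative_intros dC d_nth)+)
      (use w_pos in \<open>simp add: x fun_eq_iff flip: w_def; simp add: dw_def field_simps\<close>)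
  have d\<Theta>: "(\<Theta> has_derivative (\<lambda>h. d\<theta> (fst h) (fst (snd h)) (snd (snd h)))) (at ?x)"
    unfolding \<Theta>_def[abs_def]
    by (rule has_derivative_eq_rhs, (rule derivative_intros dW)+)
      (simp_all add: x fun_eq_iff d\<theta>_def algebra_simps)
  have d\<Sigma>: "((\<lambda>z. sin (\<Theta> z) / W z) has_derivative (\<lambda>h. d\<sigma> (fst h) (fst (snd h)) (snd (snd h))))
      (at ?x)"
    by (rule has_derivative_eq_rhs, (rule derivative_intros d\<Theta> dW | simp add: x w_pos[THEN less_imp_neq, symmetric])+)
      (use w_pos in \<open>simp add: x fun_eq_iff d\<sigma>_def \<sigma>_def field_simps power2_eq_square\<close>)
  have d\<Phi>: "((\<lambda>z. snd (snd z) * fst (snd z) / 2) has_derivative (\<lambda>h. d\<phi> (fst (snd h)) (snd (snd h))))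
      (at ?x)"
    by (rule has_derivative_eq_rhs, (rule derivative_intros)+) (simp_all add: fun_eq_iff d\<phi>_def algebra_simps)
  have dE: "((\<lambda>z. snd (snd z) * fst z $ 2) has_derivative (\<lambda>h. snd (snd h) * a$2 + t * fst h $ 2)) (at ?x)"
    by (rule has_derivative_eq_rhs, (rule derivative_intros d_nth)+) (simp_all add: fun_eq_iff)
  show ?thesis
    by (rule geo_mat_has_derivative[OF dY[of 1] dY[of 3] dC d\<Theta> d\<Sigma> d\<Phi> dE, folded closed])
      (auto simp: x in_kernel_def that simp flip: \<sigma>_def)
qed

lemma geod_has_derivative:
  obtains D where "((\<lambda>(a, b, s). geod i a b s) has_derivative D) (at (a, \<beta>, t))"
    and "\<And>\<xi> bd sd. D (\<xi>, bd, sd) = 0 \<longleftrightarrow> in_kernel \<xi> bd sd"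
proof -
  obtain D where D: "(geod_closed i has_derivative D) (at (a, \<beta>, t))"
    and kernel: "\<And>\<xi> bd sd. D (\<xi>, bd, sd) = 0 \<longleftrightarrow> in_kernel \<xi> bd sd"
    using geod_closed_has_derivative by blast
  have "(a, \<beta>, t) \<in> geod_closed_domain i"
    using w_squared_pos by (simp add: geod_closed_domain_def c_def)
  with D open_geod_closed_domain have "((\<lambda>(a, b, s). geod i a b s) has_derivative D) (at (a, \<beta>, t))"
    by (rule has_derivative_transform_within_open) (auto simp: geod_closed_domain_def geod_eq_geod_closed)
  with kernel show ?thesis
    using that by blast
qed

lemma conjugate_time_iff_kernel:
  "conjugate_time i a \<beta> t \<longleftrightarrow> (\<exists>\<xi> bd sd. \<xi> \<bullet> a = 0 \<and> (\<xi>, bd, sd) \<noteq> 0 \<and> in_kernel \<xi> bd sd)"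
proof -
  obtain D where D: "((\<lambda>(a, b, s). geod i a b s) has_derivative D) (at (a, \<beta>, t))"
    and kernel: "\<And>\<xi> bd sd. D (\<xi>, bd, sd) = 0 \<longleftrightarrow> in_kernel \<xi> bd sd"
    using geod_has_derivative by blast
  have "((\<lambda>(a, b, s). geod i a b s) has_derivative D') (at (a, \<beta>, t)) \<longleftrightarrow> D' = D" for D'
    using D has_derivative_unique by blast
  then show ?thesis
    unfolding conjugate_time_def by (auto simp: kernel)
qed

lemma in_kernel_trivial:
  assumes kernel: "in_kernel \<xi> bd sd" and tangent: "\<xi> \<bullet> a = 0"
    and sin_nz: "sin \<theta> \<noteq> 0" and tan_nz: "sin \<theta> - \<theta> * cos \<theta> \<noteq> 0"
  shows "\<xi> = 0 \<and> bd = 0 \<and> sd = 0"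
proof -
  define k :: real where "k = (if i = 1 then 1 else 0)"
  define c' where "c' = E3_coeff i \<xi> bd"
  define \<theta>' where "\<theta>' = d\<theta> \<xi> bd sd"
  define \<sigma>' where "\<sigma>' = d\<sigma> \<xi> bd sd"
  define \<phi>' where "\<phi>' = d\<phi> bd sd"
  have r1: "- sin \<theta> * \<theta>' + c * \<sigma> * \<phi>' = 0"
    and r2: "c' * \<sigma> + c * \<sigma>' - cos \<theta> * \<phi>' = 0"
    and r3: "\<xi>$1 * \<sigma> + a$1 * \<sigma>' - a$3 * \<sigma> * \<phi>' = 0"
    and r4: "\<xi>$3 * \<sigma> + a$3 * \<sigma>' + a$1 * \<sigma> * \<phi>' = 0"
    and r5: "sd * a$2 + t * \<xi>$2 = 0"
    using kernel by (simp_all add: in_kernel_def \<theta>'_def \<sigma>'_def \<phi>'_def c'_def)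
  have c_eq: "c = \<beta> - k * a$2" and c'_eq: "c' = bd - k * \<xi>$2"
    by (simp_all add: c_def c'_def E3_coeff_def k_def)
  have T: "a$1 * \<xi>$1 + a$2 * \<xi>$2 + a$3 * \<xi>$3 = 0"
    using tangent by (simp add: inner_vec_def sum_3 mult.commute)
  have \<theta>'_eq: "2 * w * \<theta>' = (a$1 * \<xi>$1 + a$3 * \<xi>$3 + c * c') * t + w\<^sup>2 * sd"
    using w_pos by (simp add: \<theta>'_def d\<theta>_def dw_def c'_def field_simps power2_eq_square)
  have \<phi>'_eq: "2 * \<phi>' = sd * \<beta> + t * bd"
    by (simp add: \<phi>'_def d\<phi>_def)
  have sin_eq: "sin \<theta> = w * \<sigma>"
    using w_pos by (simp add: \<sigma>_def)
  then have \<sigma>_nz: "\<sigma> \<noteq> 0"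
    using sin_nz by auto
  have tan_nz': "2 * \<sigma> - t * cos \<theta> \<noteq> 0"
  proof
    assume "2 * \<sigma> - t * cos \<theta> = 0"
    moreover have "2 * \<theta> = w * t"
      by (simp add: \<theta>_def)
    ultimately have "sin \<theta> - \<theta> * cos \<theta> = 0"
      using sin_eq by algebra
    with tan_nz show False ..
  qed
  have "w * \<theta>' = c * \<phi>'"
    using r1 \<sigma>_nz unfolding sin_eq by (simp add: algebra_simps)
  then have "sd * ((a$1)\<^sup>2 + (a$2)\<^sup>2 + (a$3)\<^sup>2) = 0"
    using \<theta>'_eq \<phi>'_eq T r5 c_eq c'_eq w_squared t_pos by algebra
  then have sd0: "sd = 0"
    using sum_squares_a by simp
  then have \<xi>20: "\<xi>$2 = 0"
    using r5 t_pos by simp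
  have "\<sigma>' * ((a$1)\<^sup>2 + (a$3)\<^sup>2) = 0"
    using r3 r4 T \<xi>20 by algebra
  then have \<sigma>'0: "\<sigma>' = 0"
    using a13_pos by (metis mult_eq_0_iff order_less_irrefl)
  have "bd * (2 * \<sigma> - t * cos \<theta>) = 0"
    using r2 \<sigma>'0 \<phi>'_eq sd0 c'_eq \<xi>20 by algebra
  then have bd0: "bd = 0"
    using tan_nz' by simp
  then have "\<phi>' = 0"
    using \<phi>'_eq sd0 by simp
  then have "\<xi>$1 = 0" "\<xi>$3 = 0"
    using r3 r4 \<sigma>'0 \<sigma>_nz by simp_all
  with \<xi>20 bd0 sd0 show ?thesis
    by (simp add: vec_eq_iff forall_3)
qed

lemma in_kernel_if_sin_eq_0:
  assumes "sin \<theta> = 0"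
  shows "in_kernel (vector [- a$3, 0, a$1]) 0 0"
proof -
  have "\<sigma> = 0"
    using assms by (simp add: \<sigma>_def)
  moreover have "dw (vector [- a$3, 0, a$1]) 0 = 0"
    by (simp add: dw_def E3_coeff_def)
  ultimately show ?thesis
    by (simp add: in_kernel_def d\<theta>_def d\<sigma>_def d\<phi>_def E3_coeff_def)
qed

lemma in_kernel_if_tan_eq:
  assumes "sin \<theta> = \<theta> * cos \<theta>"
  shows "in_kernel (vector [t * a$3 / 2, 0, - (t * a$1 / 2)]) 1 0"
proof -
  let ?\<xi> = "vector [t * a$3 / 2, 0, - (t * a$1 / 2)] :: real^3"
  have \<sigma>_eq: "\<sigma> = t / 2 * cos \<theta>"
    using assms w_pos by (simp add: \<sigma>_def \<theta>_def)
  have dw: "dw ?\<xi> 1 = c / w"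
    by (simp add: dw_def E3_coeff_def algebra_simps)
  then have d\<theta>: "d\<theta> ?\<xi> 1 0 = c * t / (2 * w)"
    by (simp add: d\<theta>_def)
  have d\<phi>: "d\<phi> 1 0 = t / 2"
    by (simp add: d\<phi>_def)
  have "- sin \<theta> * d\<theta> ?\<xi> 1 0 + c * \<sigma> * d\<phi> 1 0 = 0"
    by (simp add: d\<theta> d\<phi> \<sigma>_def)
  moreover have "d\<sigma> ?\<xi> 1 0 = 0"
    by (simp add: d\<sigma>_def d\<theta> dw \<sigma>_eq)
  moreover have "E3_coeff i ?\<xi> 1 = 1"
    by (simp add: E3_coeff_def)
  ultimately show ?thesis
    by (simp add: in_kernel_def d\<phi> \<sigma>_eq)
qed

lemma conjugate_time_iff: "conjugate_time i a \<beta> t \<longleftrightarrow> sin \<theta> * (sin \<theta> - \<theta> * cos \<theta>) = 0"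
proof
  assume "conjugate_time i a \<beta> t"
  then obtain \<xi> bd sd where "\<xi> \<bullet> a = 0" "(\<xi>, bd, sd) \<noteq> 0" "in_kernel \<xi> bd sd"
    by (auto simp: conjugate_time_iff_kernel)
  then show "sin \<theta> * (sin \<theta> - \<theta> * cos \<theta>) = 0"
    using in_kernel_trivial by (fastforce simp: zero_prod_def)
next
  assume "sin \<theta> * (sin \<theta> - \<theta> * cos \<theta>) = 0"
  then consider "sin \<theta> = 0" | "sin \<theta> = \<theta> * cos \<theta>"
    by auto
  then show "conjugate_time i a \<beta> t"
  proof cases
    case 1
    have "vector [- a$3, 0, a$1] \<noteq> (0 :: real^3)"
      using a13_pos by (auto simp: vec_eq_iff forall_3)
    then show ?thesis
      unfolding conjugate_time_iff_kernel using in_kernel_if_sin_eq_0[OF 1]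
      by (intro exI[of _ "vector [- a$3, 0, a$1]"] exI[of _ 0])
        (auto simp: inner_vec_def sum_3 zero_prod_def)
  next
    case 2
    show ?thesis
      unfolding conjugate_time_iff_kernel using in_kernel_if_tan_eq[OF 2]
      by (intro exI[of _ "vector [t * a$3 / 2, 0, - (t * a$1 / 2)]"] exI[of _ 1] exI[of _ 0])
        (auto simp: inner_vec_def sum_3 zero_prod_def)
  qed
qed

end

theorem proposition4:
  fixes i :: nat and \<alpha> :: "real^3" and \<beta> t :: real
  assumes "i \<in> {1, 2}"
    and "norm \<alpha> = 1"
    and "\<alpha>$2 \<noteq> 1" and "\<alpha>$2 \<noteq> -1"
    and "t > 0"
  shows "conjugate_time i \<alpha> \<beta> t \<longleftrightarrow>
    sin (wfreq i \<alpha> \<beta> * t / 2) *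
      (sin (wfreq i \<alpha> \<beta> * t / 2) - (wfreq i \<alpha> \<beta> * t / 2) * cos (wfreq i \<alpha> \<beta> * t / 2)) = 0"
proof -
  interpret geodesic_data i \<alpha> \<beta> t
    using assms by unfold_locales auto
  have "1 - (\<alpha>$2)\<^sup>2 = (\<alpha>$1)\<^sup>2 + (\<alpha>$3)\<^sup>2"
    using sum_squares_a by simp
  then have "wfreq i \<alpha> \<beta> = w"
    using assms(1) by (auto simp: wfreq_def w_def c_def E3_coeff_def)
  then show ?thesis
    by (simp add: conjugate_time_iff \<theta>_def)
qed

end
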